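(* Let $\pi_1,\pi_2\in\mathfrak{S}_m$ and suppose that no $i\in\{1,\dots,m\}$ is fixed by exactly one of $\pi_1,\pi_2$. Then $$d_{trans}(\pi_1,\pi_2)=N(G_{\pi_1},G_{\pi_2}^{-1})-A(G_{\pi_1},G_{\pi_2}^{-1}),$$ where $N(G_{\pi_1},G_{\pi_2}^{-1})$ is the number of non-isolated nodes of the multigraph $G_{\pi_1}+G_{\pi_2}^{-1}$ and $A(G_{\pi_1},G_{\pi_2}^{-1})$ is the number of alternating cycles in $G_{\pi_1}+G_{\pi_2}^{-1}$.
   Context: $\mathfrak{S}_m$ is the symmetric group on $\{1,\dots,m\}$; permutations are composed right to left. For $\pi_1,\pi_2\in\mathfrak{S}_m$, $d_{trans}(\pi_1,\pi_2)$ is the least number of transpositions whose product equals $\pi_2^{-1}\pi_1$ (zero if this is the identity). For $\pi\in\mathfrak{S}_m$, $G_\pi$ is the directed graph on $\{1,\dots,m\}$ with arc set $Q_\pi=\{(i,j): i\ne j,\ \pi(i)=j\}$, and $G_\pi^{-1}$ is the graph with all arcs reversed (arc set $Q_\pi^{-1}$). $G_{\pi_1}+G_{\pi_2}^{-1}$ is the directed multigraph on $\{1,\dots,m\}$ with red arcs $Q_{\pi_1}$ and blue arcs $Q_{\pi_2}^{-1}$ (a red and a blue arc with the same endpoints are distinct arcs). A node is isolated if it is incident to no arc. An alternating cycle is a closed directed trail (no arc repeated) in this multigraph in which consecutive arcs, including the last and the first, have different colors, considered up to cyclic rotation. *)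

theory Defs
  imports "HOL-Combinatorics.Combinatorics"
begin

text \<open>Permutations of {1..m} are functions nat => nat with p permutes {1..m}.
  Composition is right to left: (f o g) x = f (g x).\<close>

text \<open>Product of a list of transpositions (leftmost factor applied last).\<close>
definition trans_prod :: "(nat \<times> nat) list \<Rightarrow> nat \<Rightarrow> nat" where
  "trans_prod ts = foldr (\<lambda>(a, b) f. transpose a b \<circ> f) ts id"

definition d_trans :: "nat \<Rightarrow> (nat \<Rightarrow> nat) \<Rightarrow> (nat \<Rightarrow> nat) \<Rightarrow> nat" where
  "d_trans m p1 p2 = (LEAST n. \<exists>ts. length ts = n \<and>
      (\<forall>(a, b) \<in> set ts. a \<noteq> b \<and> a \<in> {1..m} \<and> b \<in> {1..m}) \<and>
      trans_prod ts = inv p2 \<circ> p1)"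

text \<open>Arcs of the multigraph G_p1 + G_p2^-1: (colour, tail, head);
  colour True = red (arcs of G_p1), False = blue (reversed arcs of G_p2).\<close>
type_synonym arc = "bool \<times> nat \<times> nat"

definition red_arcs :: "nat \<Rightarrow> (nat \<Rightarrow> nat) \<Rightarrow> arc set" where
  "red_arcs m p = {(True, i, p i) | i. i \<in> {1..m} \<and> p i \<noteq> i}"

definition blue_arcs :: "nat \<Rightarrow> (nat \<Rightarrow> nat) \<Rightarrow> arc set" where
  "blue_arcs m p = {(False, p i, i) | i. i \<in> {1..m} \<and> p i \<noteq> i}"

definition arcs :: "nat \<Rightarrow> (nat \<Rightarrow> nat) \<Rightarrow> (nat \<Rightarrow> nat) \<Rightarrow> arc set" where
  "arcs m p1 p2 = red_arcs m p1 \<union> blue_arcs m p2"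

definition arc_col :: "arc \<Rightarrow> bool" where "arc_col e = fst e"
definition arc_tail :: "arc \<Rightarrow> nat" where "arc_tail e = fst (snd e)"
definition arc_head :: "arc \<Rightarrow> nat" where "arc_head e = snd (snd e)"

definition N_nodes :: "nat \<Rightarrow> (nat \<Rightarrow> nat) \<Rightarrow> (nat \<Rightarrow> nat) \<Rightarrow> nat" where
  "N_nodes m p1 p2 = card {i \<in> {1..m}. \<exists>e \<in> arcs m p1 p2. arc_tail e = i \<or> arc_head e = i}"

text \<open>A closed alternating trail, as a list of arcs (not up to rotation): nonempty,
  no arc repeated, consecutive arcs (cyclically) join head-to-tail and have different colours.\<close>
definition alt_closed_trail :: "nat \<Rightarrow> (nat \<Rightarrow> nat) \<Rightarrow> (nat \<Rightarrow> nat) \<Rightarrow> arc list \<Rightarrow> bool" where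
  "alt_closed_trail m p1 p2 c \<longleftrightarrow> c \<noteq> [] \<and> distinct c \<and> set c \<subseteq> arcs m p1 p2 \<and>
     (\<forall>k < length c. arc_head (c ! k) = arc_tail (c ! ((k + 1) mod length c)) \<and>
                     arc_col (c ! k) \<noteq> arc_col (c ! ((k + 1) mod length c)))"

definition alt_cycles :: "nat \<Rightarrow> (nat \<Rightarrow> nat) \<Rightarrow> (nat \<Rightarrow> nat) \<Rightarrow> arc list set set" where
  "alt_cycles m p1 p2 = (\<lambda>c. {rotate k c | k. True}) ` {c. alt_closed_trail m p1 p2 c}"

definition A_cycles :: "nat \<Rightarrow> (nat \<Rightarrow> nat) \<Rightarrow> (nat \<Rightarrow> nat) \<Rightarrow> nat" where
  "A_cycles m p1 p2 = card (alt_cycles m p1 p2)"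

end

theory Submission
  imports Defs
begin

text \<open>The least number of transpositions of a finite set U with product \<sigma> is card U minus
  the number of orbits of \<sigma> on U: composing with a transposition changes the number of
  orbits by at most one, and by exactly one when it joins two orbits.
  Take \<sigma> = inv p2 \<circ> p1. Under the hypothesis p1 and p2 move the same set S of points, these
  are the non-isolated nodes, and \<sigma> fixes every point outside S. In an alternating trail every
  arc has exactly one possible successor: the red arc (i, p1 i) is followed by the blue arc
  (p1 i, \<sigma> i) and the blue arc (p2 j, j) by the red arc (j, p1 j). So alternating cycles are
  the orbits of this successor permutation of the arcs, and these correspond to the orbits
  of \<sigma> on S. Hence d = card S - (number of orbits of \<sigma> on S) = N - A.\<close>

lemma image_eq_image_comp_inv_into:
  assumes "\<And>x y. x \<in> A \<Longrightarrow> y \<in> A \<Longrightarrow> f x = f y \<Longrightarrow> g x = g y"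
  shows "g ` A = (g \<circ> inv_into A f) ` (f ` A)"
proof -
  have "g (inv_into A f (f x)) = g x" if "x \<in> A" for x
    using assms[of "inv_into A f (f x)" x] that by (simp add: inv_into_into f_inv_into_f)
  then show ?thesis by (auto simp: image_comp)
qed

lemma card_image_le_if_kernel_subset:
  assumes "finite (f ` A)" and "\<And>x y. x \<in> A \<Longrightarrow> y \<in> A \<Longrightarrow> f x = f y \<Longrightarrow> g x = g y"
  shows "card (g ` A) \<le> card (f ` A)"
proof -
  have "g ` A = (g \<circ> inv_into A f) ` (f ` A)"
    using assms(2) by (rule image_eq_image_comp_inv_into)
  also have "card \<dots> \<le> card (f ` A)"
    using assms(1) by (rule card_image_le)
  finally show ?thesis .
qed

lemma card_image_eq_if_same_kernel:
  assumes "\<And>x y. x \<in> A \<Longrightarrow> y \<in> A \<Longrightarrow> f x = f y \<longleftrightarrow> g x = g y"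
  shows "card (g ` A) = card (f ` A)"
proof -
  have g_inv: "g (inv_into A f (f x)) = g x" if "x \<in> A" for x
    using assms[of "inv_into A f (f x)" x] that by (simp add: inv_into_into f_inv_into_f)
  have "inj_on (g \<circ> inv_into A f) (f ` A)"
  proof (rule inj_onI)
    fix u v assume "u \<in> f ` A" "v \<in> f ` A" and eq: "(g \<circ> inv_into A f) u = (g \<circ> inv_into A f) v"
    then obtain x y where xy: "x \<in> A" "y \<in> A" "u = f x" "v = f y" by blast
    then have "g x = g y" using eq g_inv by simp
    then show "u = v" using xy assms by blast
  qed
  then have "card ((g \<circ> inv_into A f) ` (f ` A)) = card (f ` A)" by (rule card_image)
  moreover have "g ` A = (g \<circ> inv_into A f) ` (f ` A)"
    by (rule image_eq_image_comp_inv_into) (use assms in blast)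
  ultimately show ?thesis by simp
qed

section \<open>Orbits and transpositions\<close>

lemma permutation_orbit_eq_iff:
  assumes "permutation f"
  shows "orbit f x = orbit f y \<longleftrightarrow> y \<in> orbit f x"
  by (metis assms cyclic_on_orbit' orbit_cyclic_eq3 permutation_self_in_orbit)

lemma orbit_subset_if_closed:
  assumes "x \<in> X" and "\<And>y. y \<in> X \<Longrightarrow> f y \<in> X"
  shows "orbit f x \<subseteq> X"
proof
  fix y assume "y \<in> orbit f x" then show "y \<in> X"
    by induct (auto intro: assms)
qed

lemma card_orbits_fixpoints:
  assumes "\<And>x. x \<in> U \<Longrightarrow> f x = x"
  shows "card (orbit f ` U) = card U"
proof -
  have "orbit f ` U = (\<lambda>x. {x}) ` U"
    by (rule image_cong) (simp_all add: orbit_eq_singleton_iff assms)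
  then show ?thesis by (simp add: card_image)
qed

lemma card_orbits_permutes_superset:
  assumes "f permutes S" and "S \<subseteq> U" and "finite U"
  shows "card (orbit f ` U) = card (orbit f ` S) + card (U - S)"
proof -
  have fixed: "f x = x" if "x \<in> U - S" for x
    using assms(1) that by (simp add: permutes_not_in)
  have "orbit f x \<noteq> orbit f y" if "x \<in> S" "y \<in> U - S" for x y
  proof -
    have "orbit f y = {y}" using fixed[OF that(2)] by (simp add: orbit_eq_singleton_iff)
    then show ?thesis using permutes_orbit_subset[OF assms(1) that(1)] that(2) by blast
  qed
  then have disjoint: "orbit f ` S \<inter> orbit f ` (U - S) = {}" by blast
  have "finite S" using assms(2,3) by (rule finite_subset)
  have "orbit f ` U = orbit f ` S \<union> orbit f ` (U - S)"
    using assms(2) by blast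
  also have "card \<dots> = card (orbit f ` S) + card (orbit f ` (U - S))"
    using \<open>finite S\<close> assms(3) disjoint by (simp add: card_Un_disjoint)
  also have "card (orbit f ` (U - S)) = card (U - S)"
    using fixed by (rule card_orbits_fixpoints)
  finally show ?thesis .
qed

lemma transpose_mem:
  assumes "x \<in> A" and "a \<in> A \<longleftrightarrow> b \<in> A"
  shows "transpose a b x \<in> A"
  using imageI[OF assms(1), of "transpose a b"] transpose_image_eq[OF assms(2)] by simp

lemma permutation_transpose_comp:
  assumes "permutation g"
  shows "permutation (transpose a b \<circ> g)"
  using assms by (simp add: permutation_compose permutation_swap_id)

lemma orbit_transpose_comp_eq:
  assumes "permutation g" and "a \<notin> orbit g x" and "b \<notin> orbit g x"
  shows "orbit (transpose a b \<circ> g) x = orbit g x"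
proof (rule orbit_cong)
  show "x \<in> orbit g x" using assms(1) by (rule permutation_self_in_orbit)
  fix s assume "s \<in> orbit g x"
  then have "g s \<in> orbit g x" by (rule orbit.step)
  then have "g s \<noteq> a" "g s \<noteq> b" using assms(2,3) by auto
  then show "(transpose a b \<circ> g) s = g s" by simp
qed

lemma orbit_transpose_comp_reaches:
  assumes "permutation g" and "b \<notin> orbit g a"
  shows "b \<in> orbit (transpose a b \<circ> g) a"
proof (rule ccontr)
  define h where "h = transpose a b \<circ> g"
  assume b_notin: "b \<notin> orbit h a"
  have "permutation h"
    unfolding h_def using assms(1) by (rule permutation_transpose_comp)
  then have a_in: "a \<in> orbit h a" by (rule permutation_self_in_orbit)
  have g_step: "g s \<in> orbit h a" if "s \<in> orbit h a" and "g s \<in> orbit g a" for s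
  proof (cases "g s = a")
    case False
    moreover have "g s \<noteq> b" using that(2) assms(2) by auto
    ultimately have "h s = g s" unfolding h_def by simp
    then show ?thesis using that(1) by (metis orbit.step)
  qed (use a_in in simp)
  \<comment> \<open>Otherwise h would agree with g along the whole g-orbit of a, which would then
    contain the g-predecessor s of a; but h s = b.\<close>
  have g_orbit_in: "s \<in> orbit h a" if "s \<in> orbit g a" for s
    using that
  proof induction
    case base
    then show ?case using g_step[OF a_in] by (simp add: orbit.base)
  next
    case (step s)
    then show ?case using g_step by (simp add: orbit.step)
  qed
  obtain s where "s \<in> orbit g a" "g s = a"
    using permutation_self_in_orbit[OF assms(1), of a] by (cases rule: orbit.cases) (metis orbit.base, blast)
  then have "s \<in> orbit h a" "h s = b" using g_orbit_in by (auto simp: h_def)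
  then show False using b_notin by (metis orbit.step)
qed

lemma orbit_transpose_comp_merge:
  assumes "permutation g" and "b \<notin> orbit g a"
  shows "orbit (transpose a b \<circ> g) a = orbit g a \<union> orbit g b"
proof -
  define h where "h = transpose a b \<circ> g"
  have "permutation h"
    unfolding h_def using assms(1) by (rule permutation_transpose_comp)
  have ab_in: "a \<in> orbit g a \<union> orbit g b" "b \<in> orbit g a \<union> orbit g b"
    using permutation_self_in_orbit[OF assms(1)] by blast+
  have "orbit h a \<subseteq> orbit g a \<union> orbit g b"
  proof (rule orbit_subset_if_closed)
    show "a \<in> orbit g a \<union> orbit g b" by (fact ab_in)
    fix y assume "y \<in> orbit g a \<union> orbit g b"
    then have "g y \<in> orbit g a \<union> orbit g b" by (blast intro: orbit.step)
    then show "h y \<in> orbit g a \<union> orbit g b"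
      unfolding h_def comp_apply by (rule transpose_mem) (use ab_in in blast)
  qed
  moreover have "orbit g c \<subseteq> orbit h a" if "c \<in> {a, b}" for c
  proof (rule orbit_subset_if_closed)
    have "a \<in> orbit h a" "b \<in> orbit h a"
      using permutation_self_in_orbit[OF \<open>permutation h\<close>] orbit_transpose_comp_reaches[OF assms]
      unfolding h_def by auto
    then show "c \<in> orbit h a" using that by blast
    fix y assume "y \<in> orbit h a"
    then have "h y \<in> orbit h a" by (rule orbit.step)
    then have "transpose a b (h y) \<in> orbit h a"
      by (rule transpose_mem) (use \<open>a \<in> orbit h a\<close> \<open>b \<in> orbit h a\<close> in blast)
    then show "g y \<in> orbit h a" unfolding h_def by simp
  qed
  ultimately show ?thesis unfolding h_def by blast
qed

lemma orbits_transpose_comp_merge: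
  assumes "g permutes U" and "finite U" and "a \<in> U" and "b \<in> U" and "b \<notin> orbit g a"
  defines "W \<equiv> orbit g a \<union> orbit g b"
  shows "orbit (transpose a b \<circ> g) ` U = insert W (orbit g ` (U - W))"
proof -
  define h where "h = transpose a b \<circ> g"
  have "permutation g" using assms(1,2) permutation_permutes by blast
  then have "permutation h" unfolding h_def by (rule permutation_transpose_comp)
  have self_in: "x \<in> orbit g x" for x
    using \<open>permutation g\<close> by (rule permutation_self_in_orbit)
  have "W \<subseteq> U" unfolding W_def using permutes_orbit_subset[OF assms(1)] assms(3,4) by blast
  have orbit_h_W: "orbit h x = W" if "x \<in> W" for x
    using that orbit_transpose_comp_merge[OF \<open>permutation g\<close> assms(5)]
      permutation_orbit_eq_iff[OF \<open>permutation h\<close>, of a x]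
    unfolding h_def W_def by simp
  have orbit_h_outside: "orbit h x = orbit g x" if "x \<in> U - W" for x
  proof -
    have "c \<notin> orbit g x" if "c \<in> {a, b}" for c
      using \<open>x \<in> U - W\<close> that permutation_orbit_eq_iff[OF \<open>permutation g\<close>, of x c] self_in
      unfolding W_def by auto
    then show ?thesis unfolding h_def by (simp add: orbit_transpose_comp_eq \<open>permutation g\<close>)
  qed
  have "a \<in> W" unfolding W_def using self_in by blast
  have "orbit h ` U = orbit h ` W \<union> orbit h ` (U - W)"
    using \<open>W \<subseteq> U\<close> by blast
  also have "\<dots> = insert W (orbit g ` (U - W))"
    using orbit_h_W orbit_h_outside \<open>a \<in> W\<close> by auto
  finally show ?thesis unfolding h_def .
qed

lemma card_orbits_transpose_comp_merge:
  assumes "g permutes U" and "finite U" and "a \<in> U" and "b \<in> U" and "b \<notin> orbit g a"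
  shows "card (orbit (transpose a b \<circ> g) ` U) + 1 = card (orbit g ` U)"
proof -
  define W where "W = orbit g a \<union> orbit g b"
  have "permutation g" using assms(1,2) permutation_permutes by blast
  have self_in: "x \<in> orbit g x" for x
    using \<open>permutation g\<close> by (rule permutation_self_in_orbit)
  have "W \<subseteq> U" unfolding W_def using permutes_orbit_subset[OF assms(1)] assms(3,4) by blast
  have orbit_g_W: "orbit g ` W = {orbit g a, orbit g b}"
    unfolding W_def using permutation_orbit_eq_iff[OF \<open>permutation g\<close>] self_in by blast
  have not_outside: "X \<notin> orbit g ` (U - W)" if "X \<subseteq> W" for X
    using that self_in by blast
  have "orbit g a \<noteq> orbit g b" using assms(5) self_in by blast
  have "finite (orbit g ` (U - W))" using assms(2) by simp
  then have "card (orbit (transpose a b \<circ> g) ` U) = card (orbit g ` (U - W)) + 1"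
    using orbits_transpose_comp_merge[OF assms] not_outside[of W] unfolding W_def by simp
  moreover have "orbit g ` U = orbit g ` W \<union> orbit g ` (U - W)"
    using \<open>W \<subseteq> U\<close> by blast
  then have "card (orbit g ` U) = card (orbit g ` (U - W)) + 2"
    using \<open>finite (orbit g ` (U - W))\<close> orbit_g_W \<open>orbit g a \<noteq> orbit g b\<close>
      not_outside[of "orbit g a"] not_outside[of "orbit g b"]
    unfolding W_def by simp
  ultimately show ?thesis by simp
qed

lemma orbit_transpose_comp_subset:
  assumes "permutation g" and "b \<in> orbit g a"
  shows "orbit (transpose a b \<circ> g) x \<subseteq> orbit g x"
proof (rule orbit_subset_if_closed)
  show "x \<in> orbit g x" using assms(1) by (rule permutation_self_in_orbit)
  fix y assume "y \<in> orbit g x"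
  then have "g y \<in> orbit g x" by (rule orbit.step)
  moreover have "a \<in> orbit g x \<longleftrightarrow> b \<in> orbit g x"
    using assms permutation_orbit_eq_iff by metis
  ultimately show "(transpose a b \<circ> g) y \<in> orbit g x"
    unfolding comp_apply by (rule transpose_mem)
qed

lemma card_orbits_transpose_comp_split:
  assumes "g permutes U" and "finite U" and "b \<in> orbit g a"
  shows "card (orbit g ` U) \<le> card (orbit (transpose a b \<circ> g) ` U)"
proof (rule card_image_le_if_kernel_subset)
  show "finite (orbit (transpose a b \<circ> g) ` U)" using assms(2) by simp
  have "permutation g" using assms(1,2) permutation_permutes by blast
  then have "permutation (transpose a b \<circ> g)" by (rule permutation_transpose_comp)
  fix x y assume "orbit (transpose a b \<circ> g) x = orbit (transpose a b \<circ> g) y"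
  then have "x \<in> orbit (transpose a b \<circ> g) y"
    using permutation_self_in_orbit[OF \<open>permutation (transpose a b \<circ> g)\<close>, of x] by simp
  then have "x \<in> orbit g y"
    using orbit_transpose_comp_subset[OF \<open>permutation g\<close> assms(3)] by blast
  then show "orbit g x = orbit g y"
    using permutation_orbit_eq_iff[OF \<open>permutation g\<close>, of y x] by simp
qed

lemma card_orbits_transpose_comp_le:
  assumes "g permutes U" and "finite U" and "a \<in> U" and "b \<in> U"
  shows "card (orbit g ` U) \<le> card (orbit (transpose a b \<circ> g) ` U) + 1"
proof (cases "b \<in> orbit g a")
  case True
  then show ?thesis using card_orbits_transpose_comp_split[OF assms(1,2) True] by simp
next
  case False
  then show ?thesis using card_orbits_transpose_comp_merge[OF assms False] by simp
qed

section \<open>Factorisation into transpositions\<close>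

lemma trans_prod_Nil [simp]: "trans_prod [] = id"
  by (simp add: trans_prod_def)

lemma trans_prod_Cons [simp]: "trans_prod ((a, b) # ts) = transpose a b \<circ> trans_prod ts"
  by (simp add: trans_prod_def)

definition transpositions_on :: "nat set \<Rightarrow> (nat \<times> nat) list \<Rightarrow> bool" where
  "transpositions_on U ts \<longleftrightarrow> (\<forall>(a, b) \<in> set ts. a \<noteq> b \<and> a \<in> U \<and> b \<in> U)"

lemma transpositions_on_Cons [simp]:
  "transpositions_on U ((a, b) # ts) \<longleftrightarrow> a \<noteq> b \<and> a \<in> U \<and> b \<in> U \<and> transpositions_on U ts"
  by (simp add: transpositions_on_def)

lemma trans_prod_permutes:
  assumes "transpositions_on U ts"
  shows "trans_prod ts permutes U"
  using assms
proof (induction ts)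
  case Nil
  show ?case by (simp only: trans_prod_Nil permutes_id)
next
  case (Cons t ts)
  obtain a b where t: "t = (a, b)" by (cases t)
  with Cons have "trans_prod ts permutes U" "transpose a b permutes U"
    by (auto intro: permutes_swap_id)
  then show ?case unfolding t trans_prod_Cons by (rule permutes_compose)
qed

lemma card_le_card_orbits_trans_prod:
  assumes "finite U" and "transpositions_on U ts"
  shows "card U \<le> card (orbit (trans_prod ts) ` U) + length ts"
  using assms(2)
proof (induction ts)
  case Nil
  have "card (orbit (trans_prod []) ` U) = card U" by (rule card_orbits_fixpoints) simp
  then show ?case by (simp del: trans_prod_Nil)
next
  case (Cons t ts)
  obtain a b where t: "t = (a, b)" by (cases t)
  with Cons.prems have "a \<in> U" "b \<in> U" "transpositions_on U ts" by auto
  have "card (orbit (trans_prod ts) ` U) \<le> card (orbit (trans_prod (t # ts)) ` U) + 1"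
    unfolding t trans_prod_Cons
    using trans_prod_permutes[OF \<open>transpositions_on U ts\<close>] assms(1) \<open>a \<in> U\<close> \<open>b \<in> U\<close>
    by (rule card_orbits_transpose_comp_le)
  then show ?case using Cons.IH \<open>transpositions_on U ts\<close> by simp
qed

lemma trans_prod_exists:
  assumes "finite U" and "f permutes U"
  shows "\<exists>ts. transpositions_on U ts \<and> length ts = card U - card (orbit f ` U) \<and> trans_prod ts = f"
  using assms(2)
proof (induction "card U - card (orbit f ` U)" arbitrary: f rule: less_induct)
  case less
  show ?case
  proof (cases "f = id")
    case True
    then show ?thesis
      using card_orbits_fixpoints[of U f] by (auto simp: transpositions_on_def intro: exI[of _ "[]"])
  next
    case False
    then obtain x where x: "f x \<noteq> x" by (auto simp: fun_eq_iff)
    then have "x \<in> U" using less.prems by (meson permutes_not_in)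
    then have "f x \<in> U" using less.prems by (simp add: permutes_in_image)
    define g where "g = transpose x (f x) \<circ> f"
    have "g permutes U"
      unfolding g_def using less.prems \<open>x \<in> U\<close> \<open>f x \<in> U\<close> by (simp add: permutes_compose permutes_swap_id)
    have "orbit g x = {x}" by (simp add: orbit_eq_singleton_iff g_def)
    then have "f x \<notin> orbit g x" using x by simp
    moreover have "f = transpose x (f x) \<circ> g" unfolding g_def by (auto simp: fun_eq_iff)
    ultimately have merge: "card (orbit f ` U) + 1 = card (orbit g ` U)"
      using card_orbits_transpose_comp_merge[OF \<open>g permutes U\<close> assms(1) \<open>x \<in> U\<close> \<open>f x \<in> U\<close>] by simp
    moreover have "card (orbit g ` U) \<le> card U" using assms(1) by (rule card_image_le)
    ultimately obtain ts where
      "transpositions_on U ts" "length ts = card U - card (orbit g ` U)" "trans_prod ts = g"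
      using less.hyps[of g] \<open>g permutes U\<close> by fastforce
    then show ?thesis
      using x \<open>x \<in> U\<close> \<open>f x \<in> U\<close> merge \<open>card (orbit g ` U) \<le> card U\<close> \<open>f = transpose x (f x) \<circ> g\<close>
      by (intro exI[of _ "(x, f x) # ts"]) simp
  qed
qed

lemma Least_trans_prod_eq:
  assumes "finite U" and "f permutes U"
  shows "(LEAST n. \<exists>ts. length ts = n \<and> transpositions_on U ts \<and> trans_prod ts = f) =
    card U - card (orbit f ` U)"
proof (rule Least_equality)
  show "\<exists>ts. length ts = card U - card (orbit f ` U) \<and> transpositions_on U ts \<and> trans_prod ts = f"
    using trans_prod_exists[OF assms] by blast
next
  fix n assume "\<exists>ts. length ts = n \<and> transpositions_on U ts \<and> trans_prod ts = f"
  then show "card U - card (orbit f ` U) \<le> n"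
    using card_le_card_orbits_trans_prod[OF assms(1)] by fastforce
qed

section \<open>Enumerations of cycles up to rotation\<close>

lemma rotate1_eq_map_iff:
  "rotate1 c = map f c \<longleftrightarrow> (\<forall>k < length c. c ! ((k + 1) mod length c) = f (c ! k))"
  by (auto simp: list_eq_iff_nth_eq nth_rotate1)

definition rotations :: "'a list \<Rightarrow> 'a list set" where
  "rotations c = {rotate k c | k. True}"

(* rotate1 c = map f c means c ! ((k + 1) mod length c) = f (c ! k): c enumerates an f-cycle. *)
definition cycle_list :: "('a \<Rightarrow> 'a) \<Rightarrow> 'a set \<Rightarrow> 'a list \<Rightarrow> bool" where
  "cycle_list f E c \<longleftrightarrow> c \<noteq> [] \<and> distinct c \<and> set c \<subseteq> E \<and> rotate1 c = map f c"

lemma rotations_subset: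
  assumes "d \<in> rotations c"
  shows "rotations d \<subseteq> rotations c"
  using assms by (auto simp: rotations_def rotate_rotate)

lemma rotate_eq_map_funpow:
  assumes "rotate1 c = map f c"
  shows "rotate k c = map (f ^^ k) c"
proof (induction k)
  case (Suc k)
  have "rotate (Suc k) c = rotate k (map f c)"
    by (simp add: rotate1_rotate_swap assms)
  also have "\<dots> = map (f ^^ Suc k) c"
    by (simp add: rotate_map Suc.IH)
  finally show ?case .
qed simp

lemma cycle_list_rotate:
  assumes "cycle_list f E c"
  shows "cycle_list f E (rotate k c)"
  using assms by (simp add: cycle_list_def rotate1_rotate_swap rotate_map)

lemma funpow_cycle_list:
  assumes "cycle_list f E c"
  shows "(f ^^ k) (c ! 0) = c ! (k mod length c)"
proof -
  have "c \<noteq> []" using assms by (simp add: cycle_list_def)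
  then have "(f ^^ k) (c ! 0) = rotate k c ! 0"
    using rotate_eq_map_funpow[of c f k] assms by (simp add: cycle_list_def)
  also have "\<dots> = c ! (k mod length c)"
    using \<open>c \<noteq> []\<close> by (simp add: nth_rotate)
  finally show ?thesis .
qed

lemma set_cycle_list:
  assumes "cycle_list f E c"
  shows "set c = orbit f (c ! 0)"
proof -
  have "0 < length c" using assms by (simp add: cycle_list_def)
  moreover have "(f ^^ length c) (c ! 0) = c ! 0"
    using funpow_cycle_list[OF assms] by simp
  ultimately have "orbit f (c ! 0) = {(f ^^ k) (c ! 0) | k. k < length c}"
    by (rule orbit_altdef_bounded[rotated])
  also have "\<dots> = {c ! k | k. k < length c}"
    using funpow_cycle_list[OF assms] by (metis mod_less)
  also have "\<dots> = set c" by (simp add: set_conv_nth)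
  finally show ?thesis by simp
qed

lemma cycle_list_eqI:
  assumes "cycle_list f E c" and "cycle_list f E d" and "c ! 0 = d ! 0"
  shows "c = d"
proof -
  have "set c = set d"
    using set_cycle_list[OF assms(1)] set_cycle_list[OF assms(2)] assms(3) by simp
  then have "length c = length d"
    using distinct_card[of c] distinct_card[of d] assms(1,2) by (simp add: cycle_list_def)
  moreover have "c ! k = d ! k" if "k < length c" for k
    using funpow_cycle_list[OF assms(1), of k] funpow_cycle_list[OF assms(2), of k] assms(3)
      that \<open>length c = length d\<close> by simp
  ultimately show ?thesis by (rule nth_equalityI)
qed

lemma cycle_list_in_rotations:
  assumes "cycle_list f E c" and "cycle_list f E d" and "set c = set d"
  shows "d \<in> rotations c"
proof -
  have "d \<noteq> []" using assms(2) by (simp add: cycle_list_def)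
  then obtain j where "j < length c" "d ! 0 = c ! j"
    using assms(3) by (metis in_set_conv_nth nth_mem length_greater_0_conv)
  moreover have "c \<noteq> []" using \<open>j < length c\<close> by auto
  ultimately have "rotate j c ! 0 = d ! 0" using nth_rotate[of 0 c j] by simp
  with cycle_list_rotate[OF assms(1)] assms(2) have "rotate j c = d"
    by (rule cycle_list_eqI)
  then show ?thesis unfolding rotations_def by blast
qed

lemma rotations_eq_iff_set_eq:
  assumes "cycle_list f E c" and "cycle_list f E d"
  shows "rotations c = rotations d \<longleftrightarrow> set c = set d"
proof
  assume "rotations c = rotations d"
  moreover have "c \<in> rotations c"
    unfolding rotations_def by (rule CollectI, rule exI[of _ 0]) simp
  ultimately obtain k where "c = rotate k d" unfolding rotations_def by blast
  then show "set c = set d" by simp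
next
  assume "set c = set d"
  then have "d \<in> rotations c" "c \<in> rotations d"
    using cycle_list_in_rotations[OF assms] cycle_list_in_rotations[OF assms(2,1)] by simp_all
  then show "rotations c = rotations d"
    using rotations_subset by blast
qed

lemma cycle_list_exists:
  assumes "f permutes E" and "finite E" and "e \<in> E"
  shows "\<exists>c. cycle_list f E c \<and> c ! 0 = e"
proof -
  have "permutation f" using assms(1,2) permutation_permutes by blast
  then have "e \<in> orbit f e" by (rule permutation_self_in_orbit)
  define n where "n = funpow_dist1 f e e"
  define c where "c = map (\<lambda>k. (f ^^ k) e) [0..<n]"
  have "0 < n" "(f ^^ n) e = e"
    unfolding n_def using funpow_dist1_prop[OF \<open>e \<in> orbit f e\<close>] by simp_all
  have "inj_on (\<lambda>k. (f ^^ k) e) {0..<n}"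
    unfolding n_def using \<open>e \<in> orbit f e\<close> by (rule inj_on_funpow_dist1)
  then have "distinct c" unfolding c_def distinct_map by simp
  have "orbit f e = (\<lambda>k. (f ^^ k) e) ` {0..<n}"
    unfolding n_def using \<open>e \<in> orbit f e\<close> by (rule orbit_conv_funpow_dist1)
  then have "set c \<subseteq> E"
    unfolding c_def using permutes_orbit_subset[OF assms(1,3)] by simp
  moreover have "rotate1 c = map f c"
  proof (rule nth_equalityI)
    fix k assume "k < length (rotate1 c)"
    then have "k < n" unfolding c_def by simp
    then have "rotate1 c ! k = (f ^^ ((k + 1) mod n)) e"
      unfolding c_def by (simp add: nth_rotate1)
    also have "\<dots> = (f ^^ Suc k) e"
      using funpow_mod_eq[OF \<open>(f ^^ n) e = e\<close>] by simp
    also have "\<dots> = map f c ! k"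
      unfolding c_def using \<open>k < n\<close> by simp
    finally show "rotate1 c ! k = map f c ! k" .
  qed simp
  moreover have "c \<noteq> []" "c ! 0 = e"
    unfolding c_def using \<open>0 < n\<close> by simp_all
  ultimately show ?thesis using \<open>distinct c\<close> \<open>set c \<subseteq> E\<close> unfolding cycle_list_def by blast
qed

lemma card_rotations_cycle_lists:
  assumes "f permutes E" and "finite E"
  shows "card (rotations ` {c. cycle_list f E c}) = card (orbit f ` E)"
proof -
  have "card (rotations ` {c. cycle_list f E c}) = card (set ` {c. cycle_list f E c})"
    by (rule card_image_eq_if_same_kernel) (simp add: rotations_eq_iff_set_eq)
  also have "set ` {c. cycle_list f E c} = orbit f ` E"
  proof (intro equalityI subsetI)
    fix X assume "X \<in> set ` {c. cycle_list f E c}"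
    then obtain c where c: "cycle_list f E c" "X = set c" by blast
    then have "c ! 0 \<in> E" unfolding cycle_list_def by (simp add: subset_iff)
    then show "X \<in> orbit f ` E" using c set_cycle_list by blast
  next
    fix X assume "X \<in> orbit f ` E"
    then obtain e where "e \<in> E" "X = orbit f e" by blast
    moreover obtain c where "cycle_list f E c" "c ! 0 = e"
      using cycle_list_exists[OF assms \<open>e \<in> E\<close>] by blast
    ultimately show "X \<in> set ` {c. cycle_list f E c}"
      using set_cycle_list by blast
  qed
  finally show ?thesis .
qed

section \<open>Alternating cycles\<close>

definition moved :: "nat \<Rightarrow> (nat \<Rightarrow> nat) \<Rightarrow> nat set" where
  "moved m p = {i \<in> {1..m}. p i \<noteq> i}"

definition red_arc :: "(nat \<Rightarrow> nat) \<Rightarrow> nat \<Rightarrow> arc" where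
  "red_arc p i = (True, i, p i)"

definition blue_arc :: "(nat \<Rightarrow> nat) \<Rightarrow> nat \<Rightarrow> arc" where
  "blue_arc p j = (False, p j, j)"

definition next_arc :: "nat \<Rightarrow> (nat \<Rightarrow> nat) \<Rightarrow> (nat \<Rightarrow> nat) \<Rightarrow> arc \<Rightarrow> arc" where
  "next_arc m p1 p2 e =
    (if e \<notin> arcs m p1 p2 then e
     else if arc_col e then blue_arc p2 (inv p2 (arc_head e)) else red_arc p1 (arc_head e))"

lemma red_arc_eq_iff [simp]: "red_arc p i = red_arc p j \<longleftrightarrow> i = j"
  by (auto simp: red_arc_def)

lemma blue_arc_eq_iff [simp]: "blue_arc p i = blue_arc p j \<longleftrightarrow> i = j"
  by (auto simp: blue_arc_def)

lemma red_arc_neq_blue_arc [simp]: "red_arc p i \<noteq> blue_arc q j" "blue_arc q j \<noteq> red_arc p i"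
  by (auto simp: red_arc_def blue_arc_def)

lemma red_arc_simps [simp]:
  "arc_col (red_arc p i) = True" "arc_tail (red_arc p i) = i" "arc_head (red_arc p i) = p i"
  by (simp_all add: red_arc_def arc_col_def arc_tail_def arc_head_def)

lemma blue_arc_simps [simp]:
  "arc_col (blue_arc p j) = False" "arc_tail (blue_arc p j) = p j" "arc_head (blue_arc p j) = j"
  by (simp_all add: blue_arc_def arc_col_def arc_tail_def arc_head_def)

lemma permutes_moved:
  assumes "p permutes {1..m}"
  shows "p permutes moved m p"
  using assms by (rule permutes_superset) (auto simp: moved_def)

lemma arcs_eq: "arcs m p1 p2 = red_arc p1 ` moved m p1 \<union> blue_arc p2 ` moved m p2"
  by (auto simp: arcs_def red_arcs_def blue_arcs_def red_arc_def blue_arc_def moved_def)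

locale same_fixed_points =
  fixes m :: nat and p1 p2 :: "nat \<Rightarrow> nat"
  assumes p1_permutes: "p1 permutes {1..m}" and p2_permutes: "p2 permutes {1..m}"
    and same_fixed: "\<forall>i \<in> {1..m}. (p1 i = i) \<longleftrightarrow> (p2 i = i)"
begin

abbreviation "S \<equiv> moved m p1"
abbreviation "E \<equiv> arcs m p1 p2"
abbreviation "nx \<equiv> next_arc m p1 p2"
definition \<sigma> where "\<sigma> = inv p2 \<circ> p1"

lemma moved_p2: "moved m p2 = S"
  using same_fixed by (auto simp: moved_def)

lemma finite_S: "finite S"
  by (simp add: moved_def)

lemma sigma_permutes: "\<sigma> permutes S"
  using permutes_moved[OF p1_permutes] permutes_moved[OF p2_permutes] moved_p2
  unfolding \<sigma>_def by (simp add: permutes_compose permutes_inv)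

lemma permutation_sigma: "permutation \<sigma>"
  using sigma_permutes finite_S permutation_permutes by blast

lemma arcs_eq_moved: "E = red_arc p1 ` S \<union> blue_arc p2 ` S"
  using arcs_eq moved_p2 by simp

lemma finite_E: "finite E"
  unfolding arcs_eq_moved using finite_S by simp

lemma arcsE:
  assumes "e \<in> E"
  obtains i where "i \<in> S" "e = red_arc p1 i" | j where "j \<in> S" "e = blue_arc p2 j"
  using assms unfolding arcs_eq_moved by blast

lemma next_arc_red: "i \<in> S \<Longrightarrow> nx (red_arc p1 i) = blue_arc p2 (\<sigma> i)"
  unfolding next_arc_def arcs_eq_moved by (simp add: \<sigma>_def)

lemma next_arc_blue: "j \<in> S \<Longrightarrow> nx (blue_arc p2 j) = red_arc p1 j"
  unfolding next_arc_def arcs_eq_moved by simp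

lemma sigma_in_S: "i \<in> S \<Longrightarrow> \<sigma> i \<in> S"
  using sigma_permutes by (simp add: permutes_in_image)

lemma next_arc_permutes: "nx permutes E"
proof (rule bij_imp_permutes)
  have "nx ` E \<subseteq> E"
  proof
    fix e' assume "e' \<in> nx ` E"
    then obtain e where "e \<in> E" "e' = nx e" by blast
    then show "e' \<in> E"
      by (cases rule: arcsE) (auto simp: next_arc_red next_arc_blue sigma_in_S arcs_eq_moved)
  qed
  moreover have "inj_on nx E"
  proof (rule inj_onI)
    fix e e' assume "e \<in> E" "e' \<in> E" and eq: "nx e = nx e'"
    have "\<sigma> i = \<sigma> i' \<Longrightarrow> i = i'" for i i'
      using permutes_inj[OF sigma_permutes] by (simp add: inj_eq)
    with \<open>e \<in> E\<close> \<open>e' \<in> E\<close> eq show "e = e'"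
      by (cases rule: arcsE; cases rule: arcsE[OF \<open>e' \<in> E\<close>])
        (auto simp: next_arc_red next_arc_blue)
  qed
  ultimately show "bij_betw nx E E"
    using endo_inj_surj[OF finite_E] by (simp add: bij_betw_def)
  show "nx e = e" if "e \<notin> E" for e
    using that by (simp add: next_arc_def)
qed

lemma permutation_next_arc: "permutation nx"
  using next_arc_permutes finite_E permutation_permutes by blast

lemma next_arc_iff:
  assumes "e \<in> E" and "e' \<in> E"
  shows "arc_head e = arc_tail e' \<and> arc_col e \<noteq> arc_col e' \<longleftrightarrow> e' = nx e"
proof -
  have "p1 i = p2 j \<longleftrightarrow> j = \<sigma> i" for i j
    using permutes_inv_eq[OF p2_permutes, of "p1 i" j] unfolding \<sigma>_def by auto
  with assms show ?thesis
    by (cases rule: arcsE; cases rule: arcsE[OF \<open>e' \<in> E\<close>])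
      (auto simp: next_arc_red next_arc_blue)
qed

lemma alt_closed_trail_iff_cycle_list: "alt_closed_trail m p1 p2 c \<longleftrightarrow> cycle_list nx E c"
proof -
  have step: "arc_head (c ! k) = arc_tail (c ! ((k + 1) mod length c)) \<and>
      arc_col (c ! k) \<noteq> arc_col (c ! ((k + 1) mod length c)) \<longleftrightarrow>
      c ! ((k + 1) mod length c) = nx (c ! k)" if "set c \<subseteq> E" and "k < length c" for k
  proof (rule next_arc_iff)
    show "c ! k \<in> E" using that nth_mem by blast
    have "0 < length c" using that(2) by linarith
    then have "(k + 1) mod length c < length c" by simp
    then show "c ! ((k + 1) mod length c) \<in> E" using that(1) nth_mem by blast
  qed
  show ?thesis
    unfolding alt_closed_trail_def cycle_list_def rotate1_eq_map_iff using step by blast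
qed

lemma next_arc_twice_in_orbit:
  assumes "j \<in> S" and "red_arc p1 j \<in> orbit nx e"
  shows "blue_arc p2 (\<sigma> j) \<in> orbit nx e \<and> red_arc p1 (\<sigma> j) \<in> orbit nx e"
proof -
  have "nx (red_arc p1 j) = blue_arc p2 (\<sigma> j)" "nx (blue_arc p2 (\<sigma> j)) = red_arc p1 (\<sigma> j)"
    using assms(1) by (simp_all add: next_arc_red next_arc_blue sigma_in_S)
  then show ?thesis using assms(2) by (metis orbit.step)
qed

lemma arcs_at_sigma_orbit_in_orbit:
  assumes "i \<in> S" and "j \<in> orbit \<sigma> i"
  shows "blue_arc p2 j \<in> orbit nx (red_arc p1 i) \<and> red_arc p1 j \<in> orbit nx (red_arc p1 i)"
  using assms(2)
proof induction
  case base
  show ?case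
    using assms(1) permutation_self_in_orbit[OF permutation_next_arc] by (rule next_arc_twice_in_orbit)
next
  case (step j)
  then have "j \<in> S" "red_arc p1 j \<in> orbit nx (red_arc p1 i)"
    using permutes_orbit_subset[OF sigma_permutes assms(1)] by auto
  then show ?case by (rule next_arc_twice_in_orbit)
qed

lemma orbit_next_arc_red:
  assumes "i \<in> S"
  shows "orbit nx (red_arc p1 i) = red_arc p1 ` orbit \<sigma> i \<union> blue_arc p2 ` orbit \<sigma> i"
proof
  have orbit_in_S: "orbit \<sigma> i \<subseteq> S" using sigma_permutes assms by (rule permutes_orbit_subset)
  show "orbit nx (red_arc p1 i) \<subseteq> red_arc p1 ` orbit \<sigma> i \<union> blue_arc p2 ` orbit \<sigma> i"
  proof (rule orbit_subset_if_closed)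
    show "red_arc p1 i \<in> red_arc p1 ` orbit \<sigma> i \<union> blue_arc p2 ` orbit \<sigma> i"
      using permutation_self_in_orbit[OF permutation_sigma] by blast
    fix e assume "e \<in> red_arc p1 ` orbit \<sigma> i \<union> blue_arc p2 ` orbit \<sigma> i"
    then show "nx e \<in> red_arc p1 ` orbit \<sigma> i \<union> blue_arc p2 ` orbit \<sigma> i"
    proof (elim UnE imageE)
      fix j assume j: "j \<in> orbit \<sigma> i" and "e = red_arc p1 j"
      then have "nx e = blue_arc p2 (\<sigma> j)" using orbit_in_S next_arc_red by auto
      moreover have "\<sigma> j \<in> orbit \<sigma> i" using j by (rule orbit.step)
      ultimately show ?thesis by blast
    next
      fix j assume j: "j \<in> orbit \<sigma> i" and "e = blue_arc p2 j"
      then have "nx e = red_arc p1 j" using orbit_in_S next_arc_blue by auto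
      then show ?thesis using j by blast
    qed
  qed
  show "red_arc p1 ` orbit \<sigma> i \<union> blue_arc p2 ` orbit \<sigma> i \<subseteq> orbit nx (red_arc p1 i)"
    using arcs_at_sigma_orbit_in_orbit[OF assms] by blast
qed

lemma orbit_next_arc_blue:
  assumes "j \<in> S"
  shows "orbit nx (blue_arc p2 j) = orbit nx (red_arc p1 j)"
proof -
  have "red_arc p1 j \<in> orbit nx (blue_arc p2 j)"
    using orbit.base[of nx "blue_arc p2 j"] next_arc_blue[OF assms] by simp
  then show ?thesis by (simp add: permutation_orbit_eq_iff[OF permutation_next_arc])
qed

lemma A_cycles_eq: "A_cycles m p1 p2 = card (orbit \<sigma> ` S)"
proof -
  have "alt_cycles m p1 p2 = rotations ` {c. cycle_list nx E c}"
    unfolding alt_cycles_def alt_closed_trail_iff_cycle_list rotations_def ..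
  then have "A_cycles m p1 p2 = card (orbit nx ` E)"
    unfolding A_cycles_def using card_rotations_cycle_lists[OF next_arc_permutes finite_E] by simp
  also have "orbit nx ` E = (\<lambda>i. orbit nx (red_arc p1 i)) ` S"
    unfolding arcs_eq_moved using orbit_next_arc_blue by auto
  also have "card \<dots> = card (orbit \<sigma> ` S)"
  proof (rule card_image_eq_if_same_kernel)
    have red_preimage: "{j. red_arc p1 j \<in> orbit nx (red_arc p1 i)} = orbit \<sigma> i" if "i \<in> S" for i
      using orbit_next_arc_red[OF that] by auto
    fix i j assume "i \<in> S" "j \<in> S"
    then show "orbit \<sigma> i = orbit \<sigma> j \<longleftrightarrow> orbit nx (red_arc p1 i) = orbit nx (red_arc p1 j)"
      using red_preimage orbit_next_arc_red by metis
  qed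
  finally show ?thesis .
qed

lemma N_nodes_eq: "N_nodes m p1 p2 = card S"
proof -
  have p1_in: "p1 i \<in> S" and p2_in: "p2 i \<in> S" if "i \<in> S" for i
    using that permutes_in_image[OF permutes_moved[OF p1_permutes]]
      permutes_in_image[OF permutes_moved[OF p2_permutes]] moved_p2 by simp_all
  have "{i \<in> {1..m}. \<exists>e \<in> E. arc_tail e = i \<or> arc_head e = i} = S"
  proof (intro equalityI subsetI)
    fix i assume "i \<in> {i \<in> {1..m}. \<exists>e \<in> E. arc_tail e = i \<or> arc_head e = i}"
    then obtain e where "e \<in> E" "arc_tail e = i \<or> arc_head e = i" by blast
    then show "i \<in> S" by (cases rule: arcsE) (auto simp: p1_in p2_in)
  next
    fix i assume "i \<in> S"
    then have "red_arc p1 i \<in> E" "i \<in> {1..m}" by (auto simp: arcs_eq_moved moved_def)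
    then show "i \<in> {i \<in> {1..m}. \<exists>e \<in> E. arc_tail e = i \<or> arc_head e = i}" by force
  qed
  then show ?thesis unfolding N_nodes_def by simp
qed

lemma d_trans_eq: "d_trans m p1 p2 = card S - card (orbit \<sigma> ` S)"
proof -
  have "\<sigma> permutes {1..m}"
    unfolding \<sigma>_def using p1_permutes p2_permutes by (simp add: permutes_compose permutes_inv)
  then have "d_trans m p1 p2 = card {1..m} - card (orbit \<sigma> ` {1..m})"
    unfolding d_trans_def \<sigma>_def[symmetric] transpositions_on_def[symmetric]
    by (rule Least_trans_prod_eq[OF finite_atLeastAtMost])
  also have "card (orbit \<sigma> ` {1..m}) = card (orbit \<sigma> ` S) + card ({1..m} - S)"
    using sigma_permutes by (rule card_orbits_permutes_superset) (auto simp: moved_def)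
  also have "card {1..m} - (card (orbit \<sigma> ` S) + card ({1..m} - S)) = card S - card (orbit \<sigma> ` S)"
  proof -
    have "S \<subseteq> {1..m}" by (auto simp: moved_def)
    then have "card ({1..m} - S) = card {1..m} - card S" "card S \<le> card {1..m}"
      using card_Diff_subset[OF finite_S] card_mono[OF finite_atLeastAtMost] by blast+
    then show ?thesis by linarith
  qed
  finally show ?thesis .
qed

end

theorem proposition4:
  fixes m :: nat and p1 p2 :: "nat \<Rightarrow> nat"
  assumes "p1 permutes {1..m}" and "p2 permutes {1..m}"
    and "\<forall>i \<in> {1..m}. (p1 i = i) \<longleftrightarrow> (p2 i = i)"
  shows "int (d_trans m p1 p2) = int (N_nodes m p1 p2) - int (A_cycles m p1 p2)"
proof -
  interpret same_fixed_points m p1 p2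
    using assms by unfold_locales
  have "card (orbit \<sigma> ` S) \<le> card S" using finite_S by (rule card_image_le)
  then show ?thesis using d_trans_eq N_nodes_eq A_cycles_eq by simp
qed

end
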